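(* Let $d\in\mathbb{N}$ and let $\mathcal{S}$ be a dictionary of words in $\Sigma^L$. If there exists an origin word for $\mathcal{S}$ that is not good, then there is no $c\in\Sigma^L$ with $\mathrm{dist}(c,s)\le d$ for all $s\in\mathcal{S}$.
   Context: $\mathrm{dist}$ denotes Hamming distance. An origin word for $\mathcal{S}$ is a word $o\in\Sigma^L$ such that for every position $i\in\{1,\ldots,L\}$, $|\{s\in\mathcal{S}: s[i]=o[i]\}|\ge |\mathcal{S}|/(2|\Sigma|)$. An origin word $o$ is good if $\mathrm{dist}(o,s)\le 4|\Sigma|d$ for every $s\in\mathcal{S}$. *)

theory Defs
  imports Complex_Main
begin

definition words :: "'a set \<Rightarrow> nat \<Rightarrow> 'a list set" where
  "words Alph L = {w. length w = L \<and> set w \<subseteq> Alph}"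

definition hdist :: "'a list \<Rightarrow> 'a list \<Rightarrow> nat" where
  "hdist x y = card {i. i < length x \<and> x ! i \<noteq> y ! i}"

definition origin_word :: "'a set \<Rightarrow> nat \<Rightarrow> 'a list set \<Rightarrow> 'a list \<Rightarrow> bool" where
  "origin_word Alph L S w \<longleftrightarrow> w \<in> words Alph L \<and>
     (\<forall>i<L. real (card {s\<in>S. s ! i = w ! i}) \<ge> real (card S) / (2 * real (card Alph)))"

definition good_origin :: "'a set \<Rightarrow> nat \<Rightarrow> 'a list set \<Rightarrow> nat \<Rightarrow> 'a list \<Rightarrow> bool" where
  "good_origin Alph L S d w \<longleftrightarrow> origin_word Alph L S w \<and>
     (\<forall>s\<in>S. hdist w s \<le> 4 * card Alph * d)"

end

theory Submission
  imports Defs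
begin

text \<open>
  Let \<open>c\<close> be a centre within distance \<open>d\<close> of every word of \<open>S\<close>, let \<open>w\<close> be an origin
  word and \<open>k = |\<Sigma>|\<close>. At each position where \<open>w\<close> and \<open>c\<close> differ, at least \<open>|S|/(2k)\<close>
  words agree with \<open>w\<close> and hence disagree with \<open>c\<close>. Counting these disagreements
  once by position and once by word gives \<open>dist(w,c) |S|/(2k) \<le> |S| d\<close>, i.e.
  \<open>dist(w,c) \<le> 2kd\<close>; by the triangle inequality every \<open>s \<in> S\<close> then satisfies
  \<open>dist(w,s) \<le> 2kd + d \<le> 4kd\<close>, so \<open>w\<close> is good.
\<close>

lemma sum_card_filter_swap:
  assumes "finite A" and "finite B"
  shows "(\<Sum>a\<in>A. card {b\<in>B. R a b}) = (\<Sum>b\<in>B. card {a\<in>A. R a b})"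
proof -
  have card_filter: "card {x\<in>X. P x} = (\<Sum>x\<in>X. if P x then 1 else 0)" if "finite X"
    for X :: "'c set" and P
    using that by (simp add: sum.inter_filter[symmetric])
  show ?thesis
    using assms by (simp add: card_filter sum.swap[of _ A B])
qed

lemma hdist_triangle:
  assumes "length x = length y"
  shows "hdist x z \<le> hdist x y + hdist y z"
proof -
  have "{i. i < length x \<and> x ! i \<noteq> z ! i}
      \<subseteq> {i. i < length x \<and> x ! i \<noteq> y ! i} \<union> {i. i < length y \<and> y ! i \<noteq> z ! i}"
    using assms by auto
  then have "hdist x z \<le> card ({i. i < length x \<and> x ! i \<noteq> y ! i} \<union> {i. i < length y \<and> y ! i \<noteq> z ! i})"
    unfolding hdist_def by (intro card_mono) auto
  also have "\<dots> \<le> hdist x y + hdist y z"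
    unfolding hdist_def by (rule card_Un_le)
  finally show ?thesis .
qed

lemma hdist_le_of_agreement:
  fixes m :: real
  assumes "finite S" and "length c = length w"
    and close: "\<And>s. s \<in> S \<Longrightarrow> hdist c s \<le> d"
    and agree: "\<And>i. i < length w \<Longrightarrow> m \<le> card {s\<in>S. s ! i = w ! i}"
  shows "m * hdist w c \<le> card S * d"
proof -
  define D where "D = {i. i < length w \<and> w ! i \<noteq> c ! i}"
  have "finite D"
    unfolding D_def by simp
  have per_word: "card {i\<in>D. s ! i = w ! i} \<le> d" if "s \<in> S" for s
  proof -
    have "{i\<in>D. s ! i = w ! i} \<subseteq> {i. i < length c \<and> c ! i \<noteq> s ! i}"
      unfolding D_def using assms(2) by auto
    then have "card {i\<in>D. s ! i = w ! i} \<le> hdist c s"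
      unfolding hdist_def by (intro card_mono) auto
    with close[OF that] show ?thesis by linarith
  qed
  have "m * hdist w c = (\<Sum>i\<in>D. m)"
    unfolding hdist_def D_def by simp
  also have "\<dots> \<le> (\<Sum>i\<in>D. real (card {s\<in>S. s ! i = w ! i}))"
    by (rule sum_mono) (use agree D_def in auto)
  also have "\<dots> = real (\<Sum>s\<in>S. card {i\<in>D. s ! i = w ! i})"
    using sum_card_filter_swap[OF \<open>finite S\<close> \<open>finite D\<close>, of "\<lambda>s i. s ! i = w ! i"]
    by simp
  also have "\<dots> \<le> real (\<Sum>s\<in>S. d)"
    by (simp only: of_nat_le_iff) (rule sum_mono[OF per_word])
  finally show ?thesis
    by simp
qed

lemma origin_word_hdist_centre:
  assumes "origin_word Alph L S w" and "finite Alph" and "Alph \<noteq> {}"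
    and "finite S" and "S \<noteq> {}" and "length c = L"
    and close: "\<And>s. s \<in> S \<Longrightarrow> hdist c s \<le> d"
  shows "hdist w c \<le> 2 * card Alph * d"
proof -
  define k where "k = real (card Alph)"
  have "k > 0" and "card S > 0"
    using assms(2-5) by (simp_all add: k_def card_gt_0_iff)
  have "length w = L"
    using assms(1) unfolding origin_word_def words_def by simp
  have "card S / (2 * k) * hdist w c \<le> card S * d"
    using assms(1,4,6) close \<open>length w = L\<close>
    by (intro hdist_le_of_agreement) (auto simp: origin_word_def k_def)
  then have "real (hdist w c) \<le> 2 * k * d"
    using \<open>k > 0\<close> \<open>card S > 0\<close> by (simp add: field_simps)
  also have "\<dots> = real (2 * card Alph * d)"
    by (simp add: k_def)
  finally show ?thesis
    by (simp only: of_nat_le_iff)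
qed

theorem lemma9:
  fixes Alph :: "'a set" and L d :: nat and S :: "'a list set"
  assumes "finite Alph" and "Alph \<noteq> {}"
    and "S \<subseteq> words Alph L" and "finite S"
    and "\<exists>w. origin_word Alph L S w \<and> \<not> good_origin Alph L S d w"
  shows "\<not> (\<exists>c\<in>words Alph L. \<forall>s\<in>S. hdist c s \<le> d)"
proof
  assume "\<exists>c\<in>words Alph L. \<forall>s\<in>S. hdist c s \<le> d"
  then obtain c where "length c = L" and close: "\<And>s. s \<in> S \<Longrightarrow> hdist c s \<le> d"
    unfolding words_def by blast
  obtain w s where origin: "origin_word Alph L S w" and "s \<in> S"
    and far: "hdist w s > 4 * card Alph * d"
    using assms(5) unfolding good_origin_def by force
  have "card Alph \<ge> 1"
    using assms(1,2) by (simp add: Suc_leI card_gt_0_iff)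
  have "length w = L"
    using origin unfolding origin_word_def words_def by simp
  have "hdist w s \<le> hdist w c + hdist c s"
    using \<open>length w = L\<close> \<open>length c = L\<close> by (intro hdist_triangle) simp
  also have "\<dots> \<le> 2 * card Alph * d + d"
  proof (rule add_mono)
    show "hdist w c \<le> 2 * card Alph * d"
      using \<open>s \<in> S\<close> \<open>length c = L\<close> close
      by (intro origin_word_hdist_centre[OF origin assms(1,2,4)]) auto
    show "hdist c s \<le> d"
      using close[OF \<open>s \<in> S\<close>] .
  qed
  also have "\<dots> \<le> 4 * card Alph * d"
    using \<open>card Alph \<ge> 1\<close> by (simp add: mult_le_mono)
  finally show False
    using far by simp
qed

end
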